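(* Let $Y$ be a set, $X$ a real vector space, $K$ a compact topological space and $(\Omega,\Sigma,\nu)$ a measure space. Let $\mathcal H$ be a set of functions $\Omega\to X$ with $\alpha\mathcal H=\mathcal H$ for all $\alpha\in\mathbb R$, and let $\mathcal F$ be a set of maps $X\to Y$. Let $S:\mathcal F\times\mathcal H\to\{\text{measurable functions }\Omega\to\mathbb R\}$ and $R:\mathcal H\times K\to\{\text{measurable functions }\Omega\to\mathbb R\}$ satisfy $$|\alpha S(u,f)|=|S(u,\alpha f)|,\qquad |\alpha R(f,k)|=|R(\alpha f,k)|$$ for all $\alpha\in\mathbb R$, $u\in\mathcal F$, $f\in\mathcal H$, $k\in K$. Suppose that for all $1\le r<s<\infty$ there is a constant $C_{s,r}$ with $\|h\|_{L_s(\nu)}\le C_{s,r}\|h\|_{L_r(\nu)}$ for all measurable $h$. Let $1\le p_1\le p_2<\infty$ and $1\le q_1\le q_2<\infty$ with $$\frac1{p_1}-\frac1{p_2}\le \frac1{q_1}-\frac1{q_2}.$$ Then $RS(q_1,p_1)\subseteq RS(q_2,p_2)$.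
   Context: For $g:\Omega\to\mathbb R$, $f\in\mathcal H$ and $w\in\Omega$, $g(w)f\in\mathcal H$ denotes the scalar multiple of the function $f$ by the number $g(w)$, and $S(u,g(w)f)(w)$ denotes the value at the point $w$ of the function $S(u,g(w)f)$ (similarly for $R$). For $1\le q,p<\infty$, a map $u\in\mathcal F$ is called $(q,p)$-$RS$ summing if there is a constant $C>0$ such that $$\Big(\int_\Omega |S(u,g(w)f)(w)|^q\,d\nu(w)\Big)^{1/q}\le C\sup_{k\in K}\Big(\int_\Omega |R(g(w)f,k)(w)|^p\,d\nu(w)\Big)^{1/p}$$ for all $f\in\mathcal H$ and all $g\in\mathcal L_q(\nu)$. $RS(q,p)$ denotes the class of all $(q,p)$-$RS$ summing maps. *)

theory Defs
  imports "HOL-Analysis.Analysis"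
begin

definition lpnorm :: "'w measure \<Rightarrow> real \<Rightarrow> ('w \<Rightarrow> real) \<Rightarrow> ennreal" where
  "lpnorm M p h =
     (let I = (\<integral>\<^sup>+ w. ennreal (\<bar>h w\<bar> powr p) \<partial>M)
      in if I = \<infinity> then \<infinity> else ennreal (enn2real I powr (1 / p)))"

definition RS ::
  "'w measure \<Rightarrow> (('x::real_vector) \<Rightarrow> 'y) set \<Rightarrow> ('w \<Rightarrow> 'x) set \<Rightarrow> 'k set
   \<Rightarrow> (('x \<Rightarrow> 'y) \<Rightarrow> ('w \<Rightarrow> 'x) \<Rightarrow> 'w \<Rightarrow> real)
   \<Rightarrow> (('w \<Rightarrow> 'x) \<Rightarrow> 'k \<Rightarrow> 'w \<Rightarrow> real)
   \<Rightarrow> real \<Rightarrow> real \<Rightarrow> ('x \<Rightarrow> 'y) set" where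
  "RS M F H K S R q p =
    {u \<in> F. \<exists>C>0. \<forall>f\<in>H. \<forall>g. g \<in> borel_measurable M \<and> lpnorm M q g < \<infinity> \<longrightarrow>
        lpnorm M q (\<lambda>w. S u (\<lambda>v. g w *\<^sub>R f v) w)
          \<le> ennreal C * (SUP k\<in>K. lpnorm M p (\<lambda>w. R (\<lambda>v. g w *\<^sub>R f v) k w))}"

end

theory Submission
  imports Defs
begin

text \<open>Write \<open>a = S(u,f)\<close> and \<open>b\<^sub>k = R(f,k)\<close>; by homogeneity the \<open>(q,p)\<close>-summing inequality
  says \<open>\<parallel>g a\<parallel>\<^sub>q \<le> C sup\<^sub>k \<parallel>g b\<^sub>k\<parallel>\<^sub>p\<close> for all scalar functions \<open>g\<close>. Put \<open>1/r = 1/q\<^sub>1 - 1/q\<^sub>2\<close>.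
  Testing the \<open>(q\<^sub>1,p\<^sub>1)\<close>-inequality on \<open>g' = \<bar>g a\<bar>\<^bsup>q\<^sub>2/r\<^esup> g\<close> gives \<open>\<parallel>g a\<parallel>\<^sub>q\<^sub>2\<^bsup>q\<^sub>2/q\<^sub>1\<^esup>\<close> on the
  left, while on the right Hoelder's inequality and the reverse inequality
  \<open>\<parallel>\<cdot>\<parallel>\<^sub>s \<le> C \<parallel>\<cdot>\<parallel>\<^sub>r\<close> bound \<open>\<parallel>g' b\<^sub>k\<parallel>\<^sub>p\<^sub>1\<close> by \<open>D \<parallel>g a\<parallel>\<^sub>q\<^sub>2\<^bsup>q\<^sub>2/r\<^esup> \<parallel>g b\<^sub>k\<parallel>\<^sub>p\<^sub>2\<close>.
  Dividing gives the \<open>(q\<^sub>2,p\<^sub>2)\<close>-inequality with constant \<open>C D\<close>. To keep all norms finite, \<open>g\<close> is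
  first truncated to where \<open>\<bar>a\<bar> \<le> n\<close>, and monotone convergence removes the truncation.\<close>

definition lp_integral :: "'w measure \<Rightarrow> real \<Rightarrow> ('w \<Rightarrow> real) \<Rightarrow> ennreal" where
  "lp_integral M p h = (\<integral>\<^sup>+ w. ennreal (\<bar>h w\<bar> powr p) \<partial>M)"

lemma lpnorm_eq_lp_integral:
  "lpnorm M p h =
     (if lp_integral M p h = \<infinity> then \<infinity> else ennreal (enn2real (lp_integral M p h) powr (1 / p)))"
  by (simp add: lpnorm_def lp_integral_def Let_def)

lemma lpnorm_less_top_iff: "lpnorm M p h < \<infinity> \<longleftrightarrow> lp_integral M p h < \<infinity>"
  by (simp add: lpnorm_eq_lp_integral top.not_eq_extremum)

lemma lpnorm_eq_ennreal:
  "lp_integral M p h = ennreal A \<Longrightarrow> 0 \<le> A \<Longrightarrow> lpnorm M p h = ennreal (A powr (1 / p))"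
  by (simp add: lpnorm_eq_lp_integral)

lemma lpnorm_le_ennreal_iff:
  assumes "0 < p" "0 \<le> c"
  shows "lpnorm M p h \<le> ennreal c \<longleftrightarrow> lp_integral M p h \<le> ennreal (c powr p)"
proof (cases "lp_integral M p h = \<infinity>")
  case True
  then show ?thesis by (simp add: lpnorm_eq_lp_integral top_unique)
next
  case False
  define A where "A = enn2real (lp_integral M p h)"
  have A: "lp_integral M p h = ennreal A" "0 \<le> A"
    using False by (auto simp: A_def less_top)
  have "A powr (1 / p) \<le> c \<longleftrightarrow> A \<le> c powr p"
  proof
    assume "A powr (1 / p) \<le> c"
    then have "(A powr (1 / p)) powr p \<le> c powr p"
      using assms by (intro powr_mono2) auto
    then show "A \<le> c powr p" using assms A by (simp add: powr_powr)
  next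
    assume "A \<le> c powr p"
    then have "A powr (1 / p) \<le> (c powr p) powr (1 / p)"
      using assms A by (intro powr_mono2) auto
    then show "A powr (1 / p) \<le> c" using assms by (simp add: powr_powr)
  qed
  then show ?thesis using A assms by (simp add: lpnorm_eq_ennreal)
qed

lemma lpnorm_eq_0_iff:
  assumes "0 < p" "h \<in> borel_measurable M"
  shows "lpnorm M p h = 0 \<longleftrightarrow> (AE w in M. h w = 0)"
proof -
  have "lpnorm M p h = 0 \<longleftrightarrow> lp_integral M p h = 0"
    using lpnorm_le_ennreal_iff[of p 0 M h] assms by simp
  also have "\<dots> \<longleftrightarrow> (AE w in M. h w = 0)"
    using assms by (simp add: lp_integral_def nn_integral_0_iff_AE)
  finally show ?thesis .
qed

lemma lpnorm_cong: "(\<And>w. \<bar>h w\<bar> = \<bar>h' w\<bar>) \<Longrightarrow> lpnorm M p h = lpnorm M p h'"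
  by (simp add: lpnorm_def)

lemma lpnorm_mono:
  assumes "0 < p" "\<And>w. \<bar>h w\<bar> \<le> \<bar>h' w\<bar>"
  shows "lpnorm M p h \<le> lpnorm M p h'"
proof (cases "lp_integral M p h' = \<infinity>")
  case True
  then show ?thesis by (simp add: lpnorm_eq_lp_integral)
next
  case False
  define A where "A = enn2real (lp_integral M p h')"
  have A: "lp_integral M p h' = ennreal A" "0 \<le> A"
    using False by (auto simp: A_def less_top)
  have "lp_integral M p h \<le> lp_integral M p h'"
    unfolding lp_integral_def using assms by (intro nn_integral_mono ennreal_leI powr_mono2) auto
  then have "lpnorm M p h \<le> ennreal (A powr (1 / p))"
    using assms A by (simp add: lpnorm_le_ennreal_iff powr_powr)
  then show ?thesis using A by (simp add: lpnorm_eq_ennreal)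
qed

lemma lpnorm_cmult:
  assumes "0 < p" "h \<in> borel_measurable M"
  shows "lpnorm M p (\<lambda>w. c * h w) = ennreal \<bar>c\<bar> * lpnorm M p h"
proof (cases "c = 0")
  case True
  then show ?thesis using assms lpnorm_eq_0_iff[of p "\<lambda>_. 0" M] by simp
next
  case False
  have "lp_integral M p (\<lambda>w. c * h w) = ennreal (\<bar>c\<bar> powr p) * lp_integral M p h"
    using assms by (simp add: lp_integral_def abs_mult powr_mult ennreal_mult nn_integral_cmult)
  then show ?thesis
    using False assms
    by (cases "lp_integral M p h = \<infinity>")
       (auto simp: lpnorm_eq_lp_integral ennreal_mult_top ennreal_mult_eq_top_iff
          ennreal_mult[symmetric] enn2real_mult powr_mult powr_powr)
qed

lemma lp_integral_powr: "lp_integral M p (\<lambda>w. \<bar>h w\<bar> powr e) = lp_integral M (e * p) h"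
  by (simp add: lp_integral_def powr_powr)

lemma lpnorm_le_of_truncations:
  assumes p: "0 < p" and meas: "h \<in> borel_measurable M" "a \<in> borel_measurable M"
    and trunc: "\<And>n::nat. lpnorm M p (\<lambda>w. if \<bar>a w\<bar> \<le> real n then h w else 0) \<le> c"
  shows "lpnorm M p h \<le> c"
proof (cases c)
  case (real c')
  define f where "f n w = ennreal (\<bar>if \<bar>a w\<bar> \<le> real n then h w else 0\<bar> powr p)" for n w
  have "incseq f"
    unfolding incseq_def le_fun_def f_def by auto
  moreover have "f n \<in> borel_measurable M" for n
    unfolding f_def using meas by measurable
  moreover have "(SUP n. f n w) = ennreal (\<bar>h w\<bar> powr p)" for w
  proof (rule antisym)
    show "(SUP n. f n w) \<le> ennreal (\<bar>h w\<bar> powr p)"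
      unfolding f_def using p by (auto intro!: SUP_least)
    have "f (nat \<lceil>\<bar>a w\<bar>\<rceil>) w = ennreal (\<bar>h w\<bar> powr p)"
      unfolding f_def by (simp add: real_nat_ceiling_ge)
    then show "ennreal (\<bar>h w\<bar> powr p) \<le> (SUP n. f n w)"
      by (metis UNIV_I SUP_upper)
  qed
  ultimately have "lp_integral M p h = (SUP n. integral\<^sup>N M (f n))"
    unfolding lp_integral_def by (simp flip: nn_integral_monotone_convergence_SUP)
  also have "\<dots> \<le> ennreal (c' powr p)"
    using trunc real p by (intro SUP_least) (simp add: lpnorm_le_ennreal_iff lp_integral_def f_def[abs_def])
  finally show ?thesis using real p by (simp add: lpnorm_le_ennreal_iff)
qed simp

lemma Youngs_inequality_scaled:
  fixes a b U V \<alpha> \<beta> :: real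
  assumes "0 \<le> a" "0 \<le> b" "0 < U" "0 < V" "0 < \<alpha>" "0 < \<beta>" "\<alpha> + \<beta> = 1"
  shows "a powr \<alpha> * b powr \<beta> \<le> U powr \<alpha> * V powr \<beta> * (\<alpha> / U * a + \<beta> / V * b)"
proof (cases "a = 0 \<or> b = 0")
  case True
  then show ?thesis using assms by auto
next
  case False
  then have "(a / U) powr \<alpha> * (b / V) powr \<beta> \<le> \<alpha> * (a / U) + \<beta> * (b / V)"
    using assms by (intro Youngs_inequality_0) auto
  then have "a powr \<alpha> * b powr \<beta> / (U powr \<alpha> * V powr \<beta>) \<le> \<alpha> / U * a + \<beta> / V * b"
    by (simp add: powr_divide)
  moreover have "U powr \<alpha> * V powr \<beta> > 0" using assms by simp
  ultimately show ?thesis by (simp add: divide_le_eq mult.commute)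
qed

text \<open>Hoelder's inequality, obtained by integrating Young's inequality scaled by the two integrals.\<close>
lemma nn_integral_powr_mult_le:
  fixes f1 f2 :: "'w \<Rightarrow> real"
  assumes meas: "f1 \<in> borel_measurable M" "f2 \<in> borel_measurable M"
    and nonneg: "\<And>w. 0 \<le> f1 w" "\<And>w. 0 \<le> f2 w"
    and exps: "0 < \<alpha>" "0 < \<beta>" "\<alpha> + \<beta> = 1"
    and U: "(\<integral>\<^sup>+ w. ennreal (f1 w) \<partial>M) = ennreal U" "0 \<le> U"
    and V: "(\<integral>\<^sup>+ w. ennreal (f2 w) \<partial>M) = ennreal V" "0 \<le> V"
  shows "(\<integral>\<^sup>+ w. ennreal (f1 w powr \<alpha> * f2 w powr \<beta>) \<partial>M) \<le> ennreal (U powr \<alpha> * V powr \<beta>)"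
proof (cases "U = 0 \<or> V = 0")
  case True
  then have "AE w in M. f1 w = 0 \<or> f2 w = 0"
    using U V meas nonneg by (auto simp: nn_integral_0_iff_AE)
  then have "AE w in M. ennreal (f1 w powr \<alpha> * f2 w powr \<beta>) = 0"
    by eventually_elim auto
  then have "(\<integral>\<^sup>+ w. ennreal (f1 w powr \<alpha> * f2 w powr \<beta>) \<partial>M) = (\<integral>\<^sup>+ w. 0 \<partial>M)"
    by (rule nn_integral_cong_AE)
  then show ?thesis by simp
next
  case False
  then have UV: "0 < U" "0 < V" using U V by auto
  define c1 where "c1 = U powr \<alpha> * V powr \<beta> * (\<alpha> / U)"
  define c2 where "c2 = U powr \<alpha> * V powr \<beta> * (\<beta> / V)"
  have c: "0 \<le> c1" "0 \<le> c2" using UV exps by (auto simp: c1_def c2_def)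
  have "(\<integral>\<^sup>+ w. ennreal (f1 w powr \<alpha> * f2 w powr \<beta>) \<partial>M)
      \<le> (\<integral>\<^sup>+ w. ennreal c1 * ennreal (f1 w) + ennreal c2 * ennreal (f2 w) \<partial>M)"
  proof (intro nn_integral_mono)
    fix w
    have "f1 w powr \<alpha> * f2 w powr \<beta> \<le> c1 * f1 w + c2 * f2 w"
      using Youngs_inequality_scaled[OF nonneg(1)[of w] nonneg(2)[of w] UV exps]
      by (simp add: c1_def c2_def algebra_simps)
    then have "ennreal (f1 w powr \<alpha> * f2 w powr \<beta>) \<le> ennreal (c1 * f1 w + c2 * f2 w)"
      by (rule ennreal_leI)
    also have "\<dots> = ennreal c1 * ennreal (f1 w) + ennreal c2 * ennreal (f2 w)"
      using c nonneg by (simp add: ennreal_plus[symmetric] ennreal_mult)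
    finally show "ennreal (f1 w powr \<alpha> * f2 w powr \<beta>) \<le> ennreal c1 * ennreal (f1 w) + ennreal c2 * ennreal (f2 w)" .
  qed
  also have "\<dots> = ennreal c1 * ennreal U + ennreal c2 * ennreal V"
    using meas by (simp add: nn_integral_add nn_integral_cmult U V)
  also have "\<dots> = ennreal (c1 * U + c2 * V)"
    using c U V by (simp add: ennreal_plus[symmetric] ennreal_mult)
  also have "c1 * U + c2 * V = U powr \<alpha> * V powr \<beta> * (\<alpha> + \<beta>)"
    using UV by (simp add: c1_def c2_def field_simps)
  finally show ?thesis using exps by simp
qed

lemma lpnorm_mult_le:
  assumes exps: "0 < p" "0 < s" "0 < q" "1 / p = 1 / s + 1 / q"
    and meas: "l \<in> borel_measurable M" "x \<in> borel_measurable M"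
  shows "lpnorm M p (\<lambda>w. l w * x w) \<le> lpnorm M s l * lpnorm M q x"
proof (cases "lpnorm M s l = 0 \<or> lpnorm M q x = 0")
  case True
  then have "(AE w in M. l w = 0) \<or> (AE w in M. x w = 0)"
    using exps meas by (simp add: lpnorm_eq_0_iff)
  then have "AE w in M. l w * x w = 0"
    by (metis (mono_tags, lifting) eventually_mono mult_eq_0_iff)
  then have "lpnorm M p (\<lambda>w. l w * x w) = 0"
    using exps meas by (simp add: lpnorm_eq_0_iff)
  then show ?thesis by simp
next
  case nonzero: False
  show ?thesis
  proof (cases "lp_integral M s l = \<infinity> \<or> lp_integral M q x = \<infinity>")
    case True
    then show ?thesis
      using nonzero by (auto simp: lpnorm_eq_lp_integral ennreal_mult_top mult.commute[of \<infinity>])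
  next
    case False
    define U V where "U = enn2real (lp_integral M s l)" and "V = enn2real (lp_integral M q x)"
    have U: "lp_integral M s l = ennreal U" "0 \<le> U" and V: "lp_integral M q x = ennreal V" "0 \<le> V"
      using False by (auto simp: U_def V_def less_top)
    have "lp_integral M p (\<lambda>w. l w * x w)
        = (\<integral>\<^sup>+ w. ennreal ((\<bar>l w\<bar> powr s) powr (p / s) * (\<bar>x w\<bar> powr q) powr (p / q)) \<partial>M)"
      unfolding lp_integral_def using exps by (simp add: powr_powr abs_mult powr_mult)
    also have "\<dots> \<le> ennreal (U powr (p / s) * V powr (p / q))"
    proof (rule nn_integral_powr_mult_le)
      have "p / s + p / q = p * (1 / s + 1 / q)"
        by (simp add: field_simps)
      then show "p / s + p / q = 1"
        using exps(1) by (simp flip: exps(4))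
    qed (use exps meas U V in \<open>simp_all add: lp_integral_def\<close>)
    also have "U powr (p / s) * V powr (p / q) = (U powr (1 / s) * V powr (1 / q)) powr p"
      using U V by (simp add: powr_mult powr_powr)
    finally have "lpnorm M p (\<lambda>w. l w * x w) \<le> ennreal (U powr (1 / s) * V powr (1 / q))"
      using exps by (simp add: lpnorm_le_ennreal_iff)
    then show ?thesis
      using U V by (simp add: lpnorm_eq_ennreal ennreal_mult)
  qed
qed

definition lpnorm_reverse_bounded :: "'w measure \<Rightarrow> bool" where
  "lpnorm_reverse_bounded M \<longleftrightarrow>
     (\<forall>r s. 1 \<le> r \<longrightarrow> r < s \<longrightarrow>
        (\<exists>C::real. \<forall>h\<in>borel_measurable M. lpnorm M s h \<le> ennreal C * lpnorm M r h))"

lemma lpnorm_reverse_boundedE: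
  fixes M :: "'w measure"
  assumes "lpnorm_reverse_bounded M" "1 \<le> r" "r \<le> s"
  obtains C where "0 < C" "\<And>h :: 'w \<Rightarrow> real. h \<in> borel_measurable M \<Longrightarrow> lpnorm M s h \<le> ennreal C * lpnorm M r h"
proof (cases "r = s")
  case True
  then show ?thesis using that[of 1] by simp
next
  case False
  then obtain C0 where C0: "\<forall>h\<in>borel_measurable M. lpnorm M s h \<le> ennreal C0 * lpnorm M r h"
    using assms unfolding lpnorm_reverse_bounded_def by force
  show ?thesis
  proof (rule that[of "max C0 1"])
    fix h :: "'w \<Rightarrow> real" assume "h \<in> borel_measurable M"
    then have "lpnorm M s h \<le> ennreal C0 * lpnorm M r h" using C0 by blast
    also have "\<dots> \<le> ennreal (max C0 1) * lpnorm M r h"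
      by (intro mult_right_mono ennreal_leI) auto
    finally show "lpnorm M s h \<le> ennreal (max C0 1) * lpnorm M r h" .
  qed simp
qed

text \<open>For \<open>p\<^sub>1 < p\<^sub>2\<close> this is Hoelder's inequality followed by \<open>\<parallel>l\<parallel>\<^sub>s \<le> C \<parallel>l\<parallel>\<^sub>r\<close>, where
  \<open>1/s = 1/p\<^sub>1 - 1/p\<^sub>2\<close>. For \<open>p\<^sub>1 = p\<^sub>2\<close> the natural exponent \<open>s = \<infinity>\<close> is unavailable, so we
  pass through a larger \<open>p' > p\<^sub>2\<close> and return with \<open>\<parallel>x\<parallel>\<^bsub>p'\<^esub> \<le> C \<parallel>x\<parallel>\<^bsub>p\<^sub>2\<^esub>\<close>.\<close>
lemma lpnorm_mult_le_multiplier: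
  fixes M :: "'w measure"
  assumes rev: "lpnorm_reverse_bounded M"
    and p: "1 \<le> p1" "p1 \<le> p2" and r: "1 \<le> r" "1 / p1 - 1 / p2 \<le> 1 / r"
  obtains D where "0 < D"
    "\<And>l x :: 'w \<Rightarrow> real. l \<in> borel_measurable M \<Longrightarrow> x \<in> borel_measurable M \<Longrightarrow>
       lpnorm M p1 (\<lambda>w. l w * x w) \<le> ennreal D * lpnorm M r l * lpnorm M p2 x"
proof -
  obtain p' where p': "p1 < p'" "p2 \<le> p'" "1 / p1 - 1 / p' \<le> 1 / r"
  proof (cases "p1 < p2")
    case True
    then show ?thesis using that[of p2] r by auto
  next
    case False
    have "1 / p1 - 1 / (p1 * (p1 + r) / r) = 1 / (p1 + r)"
      using p r by (simp add: divide_simps)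
    also have "\<dots> \<le> 1 / r"
      using p r by (simp add: frac_le)
    finally show ?thesis
      using False p r by (intro that[of "p1 * (p1 + r) / r"]) (simp_all add: field_simps)
  qed
  define s where "s = 1 / (1 / p1 - 1 / p')"
  have gap: "0 < 1 / p1 - 1 / p'"
    using p p' by (simp add: frac_less2)
  then have s: "0 < s" "1 / p1 = 1 / s + 1 / p'"
    by (simp_all add: s_def)
  have "r \<le> s"
    using gap p' r unfolding s_def by (simp add: le_divide_eq mult.commute divide_le_eq)
  obtain C1 where C1: "0 < C1" "\<And>h. h \<in> borel_measurable M \<Longrightarrow> lpnorm M s h \<le> ennreal C1 * lpnorm M r h"
    using lpnorm_reverse_boundedE[OF rev r(1) \<open>r \<le> s\<close>] by blast
  obtain C2 where C2: "0 < C2" "\<And>h. h \<in> borel_measurable M \<Longrightarrow> lpnorm M p' h \<le> ennreal C2 * lpnorm M p2 h"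
    using lpnorm_reverse_boundedE[OF rev _ p'(2)] p by auto
  show ?thesis
  proof (rule that[of "C1 * C2"])
    fix l x :: "'w \<Rightarrow> real" assume meas: "l \<in> borel_measurable M" "x \<in> borel_measurable M"
    have "lpnorm M p1 (\<lambda>w. l w * x w) \<le> lpnorm M s l * lpnorm M p' x"
      using p p' s meas by (intro lpnorm_mult_le) auto
    also have "\<dots> \<le> (ennreal C1 * lpnorm M r l) * (ennreal C2 * lpnorm M p2 x)"
      using C1 C2 meas by (intro mult_mono) auto
    also have "\<dots> = ennreal (C1 * C2) * lpnorm M r l * lpnorm M p2 x"
      using C1 C2 by (simp add: ennreal_mult mult_ac)
    finally show "lpnorm M p1 (\<lambda>w. l w * x w) \<le> ennreal (C1 * C2) * lpnorm M r l * lpnorm M p2 x" .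
  qed (use C1 C2 in simp)
qed

definition RS_inequality ::
  "'w measure \<Rightarrow> 'k set \<Rightarrow> real \<Rightarrow> real \<Rightarrow> real \<Rightarrow> ('w \<Rightarrow> real) \<Rightarrow> ('k \<Rightarrow> 'w \<Rightarrow> real) \<Rightarrow> bool" where
  "RS_inequality M K q p C a b \<longleftrightarrow>
     (\<forall>g\<in>borel_measurable M. lpnorm M q g < \<infinity> \<longrightarrow>
        lpnorm M q (\<lambda>w. g w * a w) \<le> ennreal C * (SUP k\<in>K. lpnorm M p (\<lambda>w. g w * b k w)))"

lemma RS_iff_RS_inequality:
  assumes S_hom: "\<And>\<alpha> u f w. u \<in> F \<Longrightarrow> f \<in> H \<Longrightarrow> \<bar>\<alpha> * S u f w\<bar> = \<bar>S u (\<lambda>v. \<alpha> *\<^sub>R f v) w\<bar>"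
    and R_hom: "\<And>\<alpha> f k w. f \<in> H \<Longrightarrow> k \<in> K \<Longrightarrow> \<bar>\<alpha> * R f k w\<bar> = \<bar>R (\<lambda>v. \<alpha> *\<^sub>R f v) k w\<bar>"
  shows "u \<in> RS M F H K S R q p \<longleftrightarrow> u \<in> F \<and> (\<exists>C>0. \<forall>f\<in>H. RS_inequality M K q p C (S u f) (R f))"
proof -
  have S_eq: "lpnorm M q (\<lambda>w. S u (\<lambda>v. g w *\<^sub>R f v) w) = lpnorm M q (\<lambda>w. g w * S u f w)"
    if "u \<in> F" "f \<in> H" for f g
    by (intro lpnorm_cong) (simp add: S_hom[OF that])
  have R_eq: "(SUP k\<in>K. lpnorm M p (\<lambda>w. R (\<lambda>v. g w *\<^sub>R f v) k w))
      = (SUP k\<in>K. lpnorm M p (\<lambda>w. g w * R f k w))" if "f \<in> H" for f g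
    by (intro SUP_cong refl lpnorm_cong) (simp add: R_hom[OF that])
  show ?thesis
    unfolding RS_def RS_inequality_def by (auto simp: S_eq R_eq)
qed

text \<open>The bound \<open>\<bar>G a\<bar> \<le> n \<bar>G\<bar>\<close> only serves to make \<open>A = \<integral> \<bar>G a\<bar>\<^bsup>q\<^sub>2\<^esup>\<close> finite, so that
  the factor \<open>A\<^bsup>1/r\<^esup>\<close> can be cancelled.\<close>
lemma RS_inequality_raise_bounded:
  fixes M :: "'w measure" and a G :: "'w \<Rightarrow> real" and b :: "'k \<Rightarrow> 'w \<Rightarrow> real"
  assumes est: "RS_inequality M K q1 p1 C a b"
    and mult: "\<And>l x. l \<in> borel_measurable M \<Longrightarrow> x \<in> borel_measurable M \<Longrightarrow>
      lpnorm M p1 (\<lambda>w. l w * x w) \<le> ennreal D * lpnorm M r l * lpnorm M p2 x"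
    and q: "0 < q1" "q1 < q2" "1 / q1 = 1 / r + 1 / q2"
    and meas: "a \<in> borel_measurable M" "\<And>k. k \<in> K \<Longrightarrow> b k \<in> borel_measurable M"
      "G \<in> borel_measurable M"
    and G: "lpnorm M q2 G < \<infinity>" "\<And>w. \<bar>G w * a w\<bar> \<le> n * \<bar>G w\<bar>" "0 \<le> n"
  shows "lpnorm M q2 (\<lambda>w. G w * a w)
    \<le> ennreal C * ennreal D * (SUP k\<in>K. lpnorm M p2 (\<lambda>w. G w * b k w))"
proof -
  let ?T = "SUP k\<in>K. lpnorm M p2 (\<lambda>w. G w * b k w)"
  have "1 / q2 < 1 / q1"
    using q(1,2) by (simp add: frac_less2)
  then have "0 < 1 / r"
    using q(3) by linarith
  then have r: "0 < r"
    by simp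
  have "lpnorm M q2 (\<lambda>w. G w * a w) \<le> lpnorm M q2 (\<lambda>w. n * G w)"
    using q G by (intro lpnorm_mono) (auto simp: abs_mult)
  also have "\<dots> < \<infinity>"
    using q G meas by (simp add: lpnorm_cmult ennreal_mult_less_top)
  finally have "lp_integral M q2 (\<lambda>w. G w * a w) < \<infinity>"
    by (simp only: lpnorm_less_top_iff)
  then obtain A where A: "lp_integral M q2 (\<lambda>w. G w * a w) = ennreal A" "0 \<le> A"
    by (cases "lp_integral M q2 (\<lambda>w. G w * a w)") auto
  show ?thesis
  proof (cases "A = 0")
    case True
    then show ?thesis using A by (simp add: lpnorm_eq_lp_integral)
  next
    case False
    define e where "e = q2 / r"
    define l where "l = (\<lambda>w. \<bar>G w * a w\<bar> powr e)"
    have l_meas: "l \<in> borel_measurable M"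
      unfolding l_def using meas by measurable
    have "lp_integral M r l = ennreal A"
      using r A by (simp add: l_def e_def lp_integral_powr)
    then have l_norm: "lpnorm M r l = ennreal (A powr (1 / r))"
      using A by (simp add: lpnorm_eq_ennreal)
    have "(e + 1) * q1 = q2"
      using q r unfolding e_def by (simp add: field_simps)
    moreover have "\<bar>l w * G w * a w\<bar> = \<bar>\<bar>G w * a w\<bar> powr (e + 1)\<bar>" for w
      by (cases "G w * a w = 0") (auto simp: l_def abs_mult powr_add)
    ultimately have "lp_integral M q1 (\<lambda>w. l w * G w * a w) = ennreal A"
      using A by (simp add: lp_integral_def powr_powr)
    then have test_norm: "lpnorm M q1 (\<lambda>w. l w * G w * a w) = ennreal (A powr (1 / q1))"
      using A by (simp add: lpnorm_eq_ennreal)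
    have "lpnorm M q1 (\<lambda>w. l w * G w) \<le> lpnorm M r l * lpnorm M q2 G"
      using q r l_meas meas by (intro lpnorm_mult_le) auto
    also have "\<dots> < \<infinity>"
      using l_norm G by (simp add: ennreal_mult_less_top)
    finally have "lpnorm M q1 (\<lambda>w. l w * G w) < \<infinity>" .
    then have "ennreal (A powr (1 / q1))
        \<le> ennreal C * (SUP k\<in>K. lpnorm M p1 (\<lambda>w. l w * G w * b k w))"
      using est l_meas meas test_norm unfolding RS_inequality_def by auto
    also have "\<dots> \<le> ennreal C * (ennreal D * ennreal (A powr (1 / r)) * ?T)"
    proof (intro mult_left_mono SUP_least)
      fix k assume "k \<in> K"
      have "lpnorm M p1 (\<lambda>w. l w * G w * b k w) = lpnorm M p1 (\<lambda>w. l w * (G w * b k w))"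
        by (simp add: mult.assoc)
      also have "\<dots> \<le> ennreal D * lpnorm M r l * lpnorm M p2 (\<lambda>w. G w * b k w)"
        using \<open>k \<in> K\<close> l_meas meas by (intro mult) auto
      also have "\<dots> \<le> ennreal D * ennreal (A powr (1 / r)) * ?T"
        unfolding l_norm using \<open>k \<in> K\<close> by (intro mult_left_mono SUP_upper) auto
      finally show "lpnorm M p1 (\<lambda>w. l w * G w * b k w) \<le> ennreal D * ennreal (A powr (1 / r)) * ?T" .
    qed simp
    also have "\<dots> = ennreal (A powr (1 / r)) * (ennreal C * ennreal D * ?T)"
      by (simp add: mult_ac)
    finally have "ennreal (A powr (1 / r)) * ennreal (A powr (1 / q2))
        \<le> ennreal (A powr (1 / r)) * (ennreal C * ennreal D * ?T)"
      using q by (simp add: powr_add ennreal_mult)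
    then have "ennreal (A powr (1 / q2)) \<le> ennreal C * ennreal D * ?T"
      using False by (simp add: ennreal_mult_le_mult_iff)
    then show ?thesis
      using A by (simp add: lpnorm_eq_ennreal)
  qed
qed

lemma RS_inequality_raise:
  fixes M :: "'w measure" and a :: "'w \<Rightarrow> real" and b :: "'k \<Rightarrow> 'w \<Rightarrow> real"
  assumes est: "RS_inequality M K q1 p1 C a b" and "0 \<le> C" "0 \<le> D"
    and mult: "\<And>l x. l \<in> borel_measurable M \<Longrightarrow> x \<in> borel_measurable M \<Longrightarrow>
      lpnorm M p1 (\<lambda>w. l w * x w) \<le> ennreal D * lpnorm M r l * lpnorm M p2 x"
    and q: "0 < q1" "q1 < q2" "1 / q1 = 1 / r + 1 / q2" and "0 < p2"
    and meas: "a \<in> borel_measurable M" "\<And>k. k \<in> K \<Longrightarrow> b k \<in> borel_measurable M"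
  shows "RS_inequality M K q2 p2 (C * D) a b"
  unfolding RS_inequality_def
proof (intro ballI impI)
  fix g assume g: "g \<in> borel_measurable M" "lpnorm M q2 g < \<infinity>"
  let ?T = "SUP k\<in>K. lpnorm M p2 (\<lambda>w. g w * b k w)"
  have trunc: "lpnorm M q2 (\<lambda>w. if \<bar>a w\<bar> \<le> real n then g w * a w else 0) \<le> ennreal (C * D) * ?T"
    for n :: nat
  proof -
    define G where "G = (\<lambda>w. if \<bar>a w\<bar> \<le> real n then g w else 0)"
    have G_meas: "G \<in> borel_measurable M"
      unfolding G_def using g meas by measurable
    have "lpnorm M q2 G \<le> lpnorm M q2 g"
      using q unfolding G_def by (intro lpnorm_mono) auto
    then have G_fin: "lpnorm M q2 G < \<infinity>"
      using g by simp
    have G_bound: "\<bar>G w * a w\<bar> \<le> real n * \<bar>G w\<bar>" for w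
      by (simp add: G_def abs_mult mult.commute mult_right_mono)
    have "lpnorm M p2 (\<lambda>w. G w * b k w) \<le> lpnorm M p2 (\<lambda>w. g w * b k w)" for k
      using \<open>0 < p2\<close> unfolding G_def by (intro lpnorm_mono) (auto simp: abs_mult)
    then have SUP_le: "(SUP k\<in>K. lpnorm M p2 (\<lambda>w. G w * b k w)) \<le> ?T"
      by (rule SUP_mono')
    have "lpnorm M q2 (\<lambda>w. if \<bar>a w\<bar> \<le> real n then g w * a w else 0) = lpnorm M q2 (\<lambda>w. G w * a w)"
      by (rule arg_cong[where f = "lpnorm M q2"]) (simp add: G_def fun_eq_iff)
    also have "\<dots> \<le> ennreal C * ennreal D * (SUP k\<in>K. lpnorm M p2 (\<lambda>w. G w * b k w))"
      by (rule RS_inequality_raise_bounded[OF est mult q meas G_meas G_fin G_bound of_nat_0_le_iff])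
    also have "\<dots> \<le> ennreal C * ennreal D * ?T"
      using SUP_le by (rule mult_left_mono) simp
    also have "\<dots> = ennreal (C * D) * ?T"
      using \<open>0 \<le> C\<close> \<open>0 \<le> D\<close> by (simp add: ennreal_mult)
    finally show ?thesis .
  qed
  have "(\<lambda>w. g w * a w) \<in> borel_measurable M"
    using g meas by measurable
  then show "lpnorm M q2 (\<lambda>w. g w * a w) \<le> ennreal (C * D) * ?T"
    using q by (intro lpnorm_le_of_truncations[OF _ _ meas(1) trunc]) auto
qed

lemma RS_inequality_mono_exponents:
  fixes M :: "'w measure"
  assumes rev: "lpnorm_reverse_bounded M"
    and p: "1 \<le> p1" "p1 \<le> p2" and q: "1 \<le> q1" "q1 \<le> q2"
    and gap: "1 / p1 - 1 / p2 \<le> 1 / q1 - 1 / q2"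
  obtains D where "0 < D"
    "\<And>C a (b :: 'k \<Rightarrow> 'w \<Rightarrow> real). RS_inequality M K q1 p1 C a b \<Longrightarrow> 0 \<le> C \<Longrightarrow>
       a \<in> borel_measurable M \<Longrightarrow> (\<And>k. k \<in> K \<Longrightarrow> b k \<in> borel_measurable M) \<Longrightarrow>
       RS_inequality M K q2 p2 (C * D) a b"
proof (cases "q1 = q2")
  case True
  have "1 / p2 \<le> 1 / p1"
    using p by (simp add: frac_le)
  then have "p1 = p2"
    using True gap by simp
  then show ?thesis
    using True by (intro that[of 1]) auto
next
  case False
  define r where "r = 1 / (1 / q1 - 1 / q2)"
  have "1 / q2 < 1 / q1" "1 / q1 \<le> 1" "0 < 1 / q2"
    using False q by (simp_all add: frac_less2)
  then have "0 < 1 / q1 - 1 / q2" "1 / q1 - 1 / q2 \<le> 1"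
    by linarith+
  then have r: "1 \<le> r" "1 / q1 = 1 / r + 1 / q2"
    unfolding r_def by (simp_all add: le_divide_eq)
  moreover have "1 / p1 - 1 / p2 \<le> 1 / r"
    using gap r(2) by simp
  ultimately obtain D where D: "0 < D"
    "\<And>l x. l \<in> borel_measurable M \<Longrightarrow> x \<in> borel_measurable M \<Longrightarrow>
       lpnorm M p1 (\<lambda>w. l w * x w) \<le> ennreal D * lpnorm M r l * lpnorm M p2 x"
    using lpnorm_mult_le_multiplier[OF rev p] by blast
  show ?thesis
  proof (rule that[OF D(1)])
    fix C a and b :: "'k \<Rightarrow> 'w \<Rightarrow> real"
    assume "RS_inequality M K q1 p1 C a b" "0 \<le> C" "a \<in> borel_measurable M"
      "\<And>k. k \<in> K \<Longrightarrow> b k \<in> borel_measurable M"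
    then show "RS_inequality M K q2 p2 (C * D) a b"
      using D False p q r by (intro RS_inequality_raise[where r = r]) auto
  qed
qed

theorem theorem3p2:
  fixes M :: "'w measure"
    and F :: "(('x::real_vector) \<Rightarrow> 'y) set"
    and H :: "('w \<Rightarrow> 'x) set"
    and K :: "('k::topological_space) set"
    and S :: "('x \<Rightarrow> 'y) \<Rightarrow> ('w \<Rightarrow> 'x) \<Rightarrow> 'w \<Rightarrow> real"
    and R :: "('w \<Rightarrow> 'x) \<Rightarrow> 'k \<Rightarrow> 'w \<Rightarrow> real"
    and p1 p2 q1 q2 :: real
  assumes "compact K"
    and H_scal: "\<And>\<alpha> f. f \<in> H \<Longrightarrow> (\<lambda>v. \<alpha> *\<^sub>R f v) \<in> H"
    and S_meas: "\<And>u f. u \<in> F \<Longrightarrow> f \<in> H \<Longrightarrow> S u f \<in> borel_measurable M"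
    and R_meas: "\<And>f k. f \<in> H \<Longrightarrow> k \<in> K \<Longrightarrow> R f k \<in> borel_measurable M"
    and S_hom: "\<And>\<alpha> u f w. u \<in> F \<Longrightarrow> f \<in> H \<Longrightarrow> \<bar>\<alpha> * S u f w\<bar> = \<bar>S u ((\<lambda>v. \<alpha> *\<^sub>R f v)) w\<bar>"
    and R_hom: "\<And>\<alpha> f k w. f \<in> H \<Longrightarrow> k \<in> K \<Longrightarrow> \<bar>\<alpha> * R f k w\<bar> = \<bar>R ((\<lambda>v. \<alpha> *\<^sub>R f v)) k w\<bar>"
    and rev: "\<And>r s. 1 \<le> r \<Longrightarrow> r < s \<Longrightarrow>
       \<exists>C::real. \<forall>h \<in> borel_measurable M. lpnorm M s h \<le> ennreal C * lpnorm M r h"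
    and "1 \<le> p1" "p1 \<le> p2"
    and "1 \<le> q1" "q1 \<le> q2"
    and "1 / p1 - 1 / p2 \<le> 1 / q1 - 1 / q2"
  shows "RS M F H K S R q1 p1 \<subseteq> RS M F H K S R q2 p2"
proof
  note RS_iff = RS_iff_RS_inequality[where F = F and H = H and S = S and K = K and R = R, OF S_hom R_hom]
  fix u assume "u \<in> RS M F H K S R q1 p1"
  then obtain C where u: "u \<in> F" and C: "0 < C" "\<And>f. f \<in> H \<Longrightarrow> RS_inequality M K q1 p1 C (S u f) (R f)"
    using RS_iff by blast
  have reverse_bounded: "lpnorm_reverse_bounded M"
    using rev unfolding lpnorm_reverse_bounded_def by blast
  obtain D where D: "0 < D"
    "\<And>C a (b :: 'k \<Rightarrow> 'w \<Rightarrow> real). RS_inequality M K q1 p1 C a b \<Longrightarrow> 0 \<le> C \<Longrightarrow>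
       a \<in> borel_measurable M \<Longrightarrow> (\<And>k. k \<in> K \<Longrightarrow> b k \<in> borel_measurable M) \<Longrightarrow>
       RS_inequality M K q2 p2 (C * D) a b"
    using RS_inequality_mono_exponents[where K = K, OF reverse_bounded assms(8-12)] by blast
  have "RS_inequality M K q2 p2 (C * D) (S u f) (R f)" if "f \<in> H" for f
    using C that S_meas[OF u that] R_meas[OF that] by (intro D(2)) auto
  moreover have "0 < C * D"
    using C D by simp
  ultimately show "u \<in> RS M F H K S R q2 p2"
    using u RS_iff by blast
qed

end
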